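(* Let $\mathcal{T}$ be a $2$-eligible microdata table and $l=2$. Then the algorithm described in the context (with arbitrary tie-breaking) always terminates during Phase One or Phase Two, and its output is a feasible solution of the reformulated tuple minimization problem whose residue set $\ddot{R}$ satisfies $|\ddot{R}| \le OPT + 1$.
   Context: A microdata table $\mathcal{T}$ is a multiset of $n$ tuples with values on $d$ quasi-identifier (QI) attributes and one sensitive attribute (SA). For a multiset $Q$ and SA value $v$, $h(Q,v)$ is the number of tuples in $Q$ with SA value $v$, $h(Q)=\max_v h(Q,v)$, pillars of $Q$ are the $v$ with $h(Q,v)=h(Q)$; $Q$ is $l$-eligible if $|Q|\ge l\cdot h(Q)$. Let $Q_1,\dots,Q_s$ be the maximal classes of tuples of $\mathcal{T}$ with identical values on all QI attributes. Reformulated tuple minimization: choose sub-multisets $Q'_i\subseteq Q_i$ and $R'=\mathcal{T}\setminus\bigcup_i Q'_i$ with all $Q'_i$ and $R'$ $l$-eligible, minimizing $|R'|$; $OPT$ is the minimum. The algorithm only moves tuples from the groups into a set $R$ (initially empty). Phase One: for each $i$, while $Q_i$ is not $l$-eligible, move a tuple of a pillar of $Q_i$ to $R$; if then $R$ is $l$-eligible, terminate. Phase Two terminology (w.r.t. current state): a group $Q$ is thin if $|Q|=l\cdot h(Q)$ and fat if $|Q|\ge l\cdot h(Q)+1$; $Q$ is conflicting if some pillar of $Q$ is a pillar of $R$; $Q$ is dead if thin and conflicting, alive otherwise; an SA value $v$ is alive if some alive group $Q$ has $h(Q,v)>0$. Phase Two iterates: if no SA value is alive, Phase Two ends (and Phase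 Three would follow). Otherwise pick an alive SA value $v$ minimizing $h(R,v)$ and an alive group $Q$ with $h(Q,v)>0$ (ties arbitrary); if $Q$ is fat move one tuple with SA value $v$ from $Q$ to $R$; if $Q$ is thin move one tuple of each pillar of $Q$ to $R$. If $R$ is now $l$-eligible, the algorithm terminates; $\ddot{R}$ is $R$ at termination. *)

theory Defs
  imports "HOL-Library.Multiset"
begin

text \<open>A tuple is a pair (QI value, SA value); a table is a multiset of tuples.\<close>

definition hv :: "('q \<times> 's) multiset \<Rightarrow> 's \<Rightarrow> nat" where
  "hv Q v = count (image_mset snd Q) v"

definition hmax :: "('q \<times> 's) multiset \<Rightarrow> nat" where
  "hmax Q = Max (insert 0 (hv Q ` snd ` set_mset Q))"

definition pillars :: "('q \<times> 's) multiset \<Rightarrow> 's set" where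
  "pillars Q = {v. hv Q v = hmax Q}"

definition eligible :: "nat \<Rightarrow> ('q \<times> 's) multiset \<Rightarrow> bool" where
  "eligible l Q \<longleftrightarrow> size Q \<ge> l * hmax Q"

definition thin :: "nat \<Rightarrow> ('q \<times> 's) multiset \<Rightarrow> bool" where
  "thin l Q \<longleftrightarrow> size Q = l * hmax Q"

definition fat :: "nat \<Rightarrow> ('q \<times> 's) multiset \<Rightarrow> bool" where
  "fat l Q \<longleftrightarrow> size Q \<ge> l * hmax Q + 1"

definition conflicting :: "('q \<times> 's) multiset \<Rightarrow> ('q \<times> 's) multiset \<Rightarrow> bool" where
  "conflicting Q R \<longleftrightarrow> pillars Q \<inter> pillars R \<noteq> {}"

definition dead :: "nat \<Rightarrow> ('q \<times> 's) multiset \<Rightarrow> ('q \<times> 's) multiset \<Rightarrow> bool" where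
  "dead l Q R \<longleftrightarrow> thin l Q \<and> conflicting Q R"

definition alive_grp :: "nat \<Rightarrow> ('q \<times> 's) multiset \<Rightarrow> ('q \<times> 's) multiset \<Rightarrow> bool" where
  "alive_grp l Q R \<longleftrightarrow> \<not> dead l Q R"

definition alive_val :: "nat \<Rightarrow> ('q \<Rightarrow> ('q \<times> 's) multiset) \<Rightarrow> ('q \<times> 's) multiset \<Rightarrow> 's \<Rightarrow> bool" where
  "alive_val l G R v \<longleftrightarrow> (\<exists>q. alive_grp l (G q) R \<and> hv (G q) v > 0)"

definition qis :: "('q \<times> 's) multiset \<Rightarrow> 'q set" where
  "qis T = fst ` set_mset T"

definition grp :: "('q \<times> 's) multiset \<Rightarrow> 'q \<Rightarrow> ('q \<times> 's) multiset" where
  "grp T q = filter_mset (\<lambda>t. fst t = q) T"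

definition residue :: "('q \<times> 's) multiset \<Rightarrow> ('q \<Rightarrow> ('q \<times> 's) multiset) \<Rightarrow> ('q \<times> 's) multiset" where
  "residue T Q' = T - (\<Sum>q\<in>qis T. Q' q)"

definition feasible_sol :: "nat \<Rightarrow> ('q \<times> 's) multiset \<Rightarrow> ('q \<Rightarrow> ('q \<times> 's) multiset) \<Rightarrow> bool" where
  "feasible_sol l T Q' \<longleftrightarrow>
     (\<forall>q. Q' q \<subseteq># grp T q \<and> eligible l (Q' q)) \<and> eligible l (residue T Q')"

definition OPT :: "nat \<Rightarrow> ('q \<times> 's) multiset \<Rightarrow> nat" where
  "OPT l T = Min {size (residue T Q') | Q'. feasible_sol l T Q'}"

text \<open>The algorithm, as a nondeterministic transition system (arbitrary tie-breaking).
  Phase One processes the QI classes in the order of a list.  \<open>PhaseTwoEnded\<close> is the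
  state in which Phase Two ends because no SA value is alive (Phase Three would follow).\<close>

datatype 'q phase = PhaseOne "'q list" | PhaseTwo | Terminated | PhaseTwoEnded

type_synonym ('q, 's) alg_state =
  "'q phase \<times> ('q \<Rightarrow> ('q \<times> 's) multiset) \<times> ('q \<times> 's) multiset"

inductive alg_step :: "nat \<Rightarrow> ('q, 's) alg_state \<Rightarrow> ('q, 's) alg_state \<Rightarrow> bool" for l where
  p1_move: "\<not> eligible l (G q) \<Longrightarrow> t \<in># G q \<Longrightarrow> snd t \<in> pillars (G q) \<Longrightarrow>
     alg_step l (PhaseOne (q # qs), G, R) (PhaseOne (q # qs), G(q := G q - {#t#}), R + {#t#})"
| p1_next: "eligible l (G q) \<Longrightarrow> alg_step l (PhaseOne (q # qs), G, R) (PhaseOne qs, G, R)"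
| p1_term: "eligible l R \<Longrightarrow> alg_step l (PhaseOne [], G, R) (Terminated, G, R)"
| p1_to_p2: "\<not> eligible l R \<Longrightarrow> alg_step l (PhaseOne [], G, R) (PhaseTwo, G, R)"
| p2_end: "(\<forall>v. \<not> alive_val l G R v) \<Longrightarrow> alg_step l (PhaseTwo, G, R) (PhaseTwoEnded, G, R)"
| p2_fat: "alive_val l G R v \<Longrightarrow> (\<forall>w. alive_val l G R w \<longrightarrow> hv R v \<le> hv R w) \<Longrightarrow>
     alive_grp l (G q) R \<Longrightarrow> hv (G q) v > 0 \<Longrightarrow> fat l (G q) \<Longrightarrow>
     t \<in># G q \<Longrightarrow> snd t = v \<Longrightarrow> G' = G(q := G q - {#t#}) \<Longrightarrow> R' = R + {#t#} \<Longrightarrow>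
     alg_step l (PhaseTwo, G, R) (if eligible l R' then Terminated else PhaseTwo, G', R')"
| p2_thin: "alive_val l G R v \<Longrightarrow> (\<forall>w. alive_val l G R w \<longrightarrow> hv R v \<le> hv R w) \<Longrightarrow>
     alive_grp l (G q) R \<Longrightarrow> hv (G q) v > 0 \<Longrightarrow> thin l (G q) \<Longrightarrow>
     M = mset_set {t \<in> set_mset (G q). snd t \<in> pillars (G q)} \<Longrightarrow>
     G' = G(q := G q - M) \<Longrightarrow> R' = R + M \<Longrightarrow>
     alg_step l (PhaseTwo, G, R) (if eligible l R' then Terminated else PhaseTwo, G', R')"

definition alg_init :: "('q \<times> 's) multiset \<Rightarrow> 'q list \<Rightarrow> ('q, 's) alg_state" where
  "alg_init T qs = (PhaseOne qs, grp T, {#})"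

end

theory Submission
  imports Defs
begin

text \<open>Phase One only removes tuples that every feasible solution must remove too: from each
  QI class it takes tuples of the class's dominant SA value, and only while the class is not
  2-eligible.  Hence, value by value, the residue \<open>R\<close> after Phase One is dominated by the
  residue of any feasible solution; if \<open>R\<close> is already eligible it is optimal, and otherwise
  \<open>2 h(R) \<le> OPT\<close>.  A non-eligible \<open>R\<close> has a unique pillar \<open>p\<close>, and every Phase Two move adds
  one or two tuples of distinct values other than \<open>p\<close> (a thin group may not be conflicting,
  and in a fat group the chosen value has minimal frequency in \<open>R\<close>), so \<open>h(R)\<close> never grows
  and the move making \<open>R\<close> eligible leaves \<open>|R| \<le> (2 h(R) - 1) + 2 \<le> OPT + 1\<close>.  Phase Two
  never gets stuck: if no SA value were alive, every nonempty group would be thin with pillar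
  \<open>p\<close>, and \<open>p\<close> would then be too frequent for \<open>T\<close> to be 2-eligible.  Termination follows
  from \<open>|R|\<close> growing.\<close>

lemma hv_empty [simp]: "hv {#} v = 0"
  by (simp add: hv_def)

lemma hv_add [simp]: "hv (A + B) v = hv A v + hv B v"
  by (simp add: hv_def)

lemma hv_add_mset [simp]: "hv (add_mset t M) v = hv M v + (if snd t = v then 1 else 0)"
  by (simp add: hv_def)

lemma hv_diff: "B \<subseteq># A \<Longrightarrow> hv (A - B) v = hv A v - hv B v"
  by (simp add: hv_def image_mset_Diff)

lemma hv_diff_add: "B \<subseteq># A \<Longrightarrow> hv (A - B) v + hv B v = hv A v"
  by (simp add: hv_def image_mset_Diff image_mset_subseteq_mono mset_subset_eq_count)

lemma hv_mono: "A \<subseteq># B \<Longrightarrow> hv A v \<le> hv B v"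
  by (simp add: hv_def image_mset_subseteq_mono mset_subset_eq_count)

lemma hv_le_size: "hv A v \<le> size A"
  by (metis count_le_size hv_def size_image_mset)

lemma hv_sum: "finite S \<Longrightarrow> hv (\<Sum>q\<in>S. G q) v = (\<Sum>q\<in>S. hv (G q) v)"
  by (induct S rule: finite_induct) auto

lemma hv_pos_iff: "0 < hv Q v \<longleftrightarrow> v \<in> snd ` set_mset Q"
  by (simp add: hv_def)

lemma sum_hv_le_size:
  assumes "finite W"
  shows "(\<Sum>w\<in>W. hv Q w) \<le> size Q"
proof -
  let ?X = "image_mset snd Q"
  have "(\<Sum>w\<in>W. count ?X w) = (\<Sum>w\<in>W \<inter> set_mset ?X. count ?X w)"
    using assms by (intro sum.mono_neutral_right) auto
  also have "\<dots> \<le> (\<Sum>w\<in>set_mset ?X. count ?X w)"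
    by (intro sum_mono2) auto
  also have "\<dots> = size ?X"
    by (simp only: size_multiset_overloaded_eq)
  finally show ?thesis
    by (simp add: hv_def)
qed

lemma hv_add_hv_le_size: "v \<noteq> w \<Longrightarrow> hv Q v + hv Q w \<le> size Q"
  using sum_hv_le_size[of "{v, w}" Q] by simp

lemma size_eq_hv_if_single_value: "(\<And>u. u \<noteq> v \<Longrightarrow> hv M u = 0) \<Longrightarrow> size M = hv M v"
proof -
  assume "\<And>u. u \<noteq> v \<Longrightarrow> hv M u = 0"
  then have "image_mset snd M = replicate_mset (hv M v) v"
    by (intro multiset_eqI) (metis count_replicate_mset hv_def)
  then show ?thesis
    by (metis size_image_mset size_replicate_mset)
qed

lemma hv_le_hmax: "hv Q v \<le> hmax Q"
proof (cases "hv Q v = 0")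
  case False
  then have "v \<in> snd ` set_mset Q"
    by (simp add: hv_pos_iff[symmetric])
  then have "hv Q v \<in> insert 0 (hv Q ` snd ` set_mset Q)"
    by (intro insertI2 imageI)
  moreover have "finite (insert 0 (hv Q ` snd ` set_mset Q))"
    by simp
  ultimately show ?thesis
    unfolding hmax_def by (rule Max_ge[rotated])
qed simp

lemma hmax_le: "(\<And>v. hv Q v \<le> k) \<Longrightarrow> hmax Q \<le> k"
  unfolding hmax_def by (subst Max_le_iff) auto

lemma hmax_attained: "0 < hmax Q \<Longrightarrow> \<exists>t. t \<in># Q \<and> hv Q (snd t) = hmax Q"
proof -
  assume pos: "0 < hmax Q"
  have "hmax Q \<in> insert 0 (hv Q ` snd ` set_mset Q)"
    unfolding hmax_def by (intro Max_in) auto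
  with pos show ?thesis by fastforce
qed

lemma hmax_pos_iff: "0 < hmax Q \<longleftrightarrow> Q \<noteq> {#}"
proof
  assume "Q \<noteq> {#}"
  then obtain t where "t \<in># Q"
    by blast
  then show "0 < hmax Q"
    using hv_le_hmax[of Q "snd t"] hv_pos_iff[of Q "snd t"] by auto
qed (auto simp: hmax_def)

lemma eligible_iff: "eligible l Q \<longleftrightarrow> (\<forall>v. l * hv Q v \<le> size Q)"
proof
  assume "eligible l Q"
  then show "\<forall>v. l * hv Q v \<le> size Q"
    using hv_le_hmax unfolding eligible_def by (meson le_trans mult_le_mono2)
next
  assume all: "\<forall>v. l * hv Q v \<le> size Q"
  show "eligible l Q"
  proof (cases "hmax Q = 0")
    case False
    then obtain t where "hv Q (snd t) = hmax Q"
      using hmax_attained[of Q] by auto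
    then show ?thesis
      using all unfolding eligible_def by metis
  qed (simp add: eligible_def)
qed

lemma not_eligible_2_unique_pillar:
  assumes "\<not> eligible 2 R"
  shows "\<exists>p. pillars R = {p} \<and> hv R p = hmax R \<and> size R < 2 * hv R p \<and>
    (\<forall>w. w \<noteq> p \<longrightarrow> hv R w < hv R p)"
proof -
  obtain p where p: "size R < 2 * hv R p"
    using assms unfolding eligible_iff by (auto simp: not_le)
  have less: "hv R w < hv R p" if "w \<noteq> p" for w
    using hv_add_hv_le_size[OF that, of R] p by linarith
  then have "hmax R \<le> hv R p"
    by (metis hmax_le less_or_eq_imp_le)
  then have max: "hv R p = hmax R"
    using hv_le_hmax[of R p] by simp
  have "w \<in> pillars R \<longleftrightarrow> w = p" for w
    using less[of w] max unfolding pillars_def by (cases "w = p") auto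
  then have "pillars R = {p}"
    by blast
  with max p less show ?thesis
    by blast
qed

lemma finite_qis [simp]: "finite (qis T)"
  by (simp add: qis_def)

lemma fst_of_mem_grp: "t \<in># grp T q \<Longrightarrow> fst t = q"
  by (simp add: grp_def)

lemma grp_eq_empty_if_notin_qis: "q \<notin> qis T \<Longrightarrow> grp T q = {#}"
  by (force simp: grp_def qis_def filter_mset_eq_conv)

lemma sum_grp_qis: "(\<Sum>q\<in>qis T. grp T q) = T"
proof -
  have "(\<Sum>q\<in>S. grp T q) = filter_mset (\<lambda>t. fst t \<in> S) T" if "finite S" for S
    using that
  proof (induct S rule: finite_induct)
    case (insert a S)
    have "filter_mset (\<lambda>t. fst t \<in> insert a S) T = grp T a + filter_mset (\<lambda>t. fst t \<in> S) T"
      unfolding grp_def by (rule multiset_eqI) (use insert in auto)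
    with insert show ?case
      by simp
  qed (simp add: filter_mset_eq_mempty_iff)
  then show ?thesis
    by (simp add: qis_def filter_mset_eq_conv)
qed

lemma sum_diff_plus_sum:
  "finite S \<Longrightarrow> (\<And>q. q \<in> S \<Longrightarrow> B q \<subseteq># A q) \<Longrightarrow>
   (\<Sum>q\<in>S. A q - B q) + (\<Sum>q\<in>S. B q) = (\<Sum>q\<in>S. A q :: 'a multiset)"
proof (induct S rule: finite_induct)
  case (insert a S)
  have "(\<Sum>q\<in>insert a S. A q - B q) + (\<Sum>q\<in>insert a S. B q) =
        (A a - B a + B a) + ((\<Sum>q\<in>S. A q - B q) + (\<Sum>q\<in>S. B q))"
    using insert.hyps by (simp add: add_ac)
  with insert show ?case
    by (simp add: subset_mset.diff_add)
qed simp

lemma residue_eq_sum_diff: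
  assumes "\<And>q. Q' q \<subseteq># grp T q"
  shows "residue T Q' = (\<Sum>q\<in>qis T. grp T q - Q' q)"
proof -
  have "(\<Sum>q\<in>qis T. grp T q - Q' q) + (\<Sum>q\<in>qis T. Q' q) = T"
    using sum_diff_plus_sum[of "qis T" Q' "grp T"] assms by (simp add: sum_grp_qis)
  then show ?thesis
    unfolding residue_def by (metis add_diff_cancel_right')
qed

definition table_split ::
  "('q \<times> 's) multiset \<Rightarrow> ('q \<Rightarrow> ('q \<times> 's) multiset) \<Rightarrow> ('q \<times> 's) multiset \<Rightarrow> bool" where
  "table_split T G R \<longleftrightarrow> (\<forall>q. G q \<subseteq># grp T q) \<and> T = R + (\<Sum>q\<in>qis T. G q)"

lemma table_split_subseteq: "table_split T G R \<Longrightarrow> G q \<subseteq># grp T q"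
  unfolding table_split_def by blast

lemma table_split_eq: "table_split T G R \<Longrightarrow> T = R + (\<Sum>q\<in>qis T. G q)"
  unfolding table_split_def by blast

lemma table_split_init: "table_split T (grp T) {#}"
  by (simp add: table_split_def sum_grp_qis)

lemma table_split_residue: "table_split T G R \<Longrightarrow> R = residue T G"
  unfolding residue_def by (metis table_split_eq add_diff_cancel_right')

lemma table_split_size_le: "table_split T G R \<Longrightarrow> size R \<le> size T"
  by (metis table_split_eq le_add1 size_union)

lemma table_split_feasible:
  "table_split T G R \<Longrightarrow> (\<And>q. eligible l (G q)) \<Longrightarrow> eligible l R \<Longrightarrow> feasible_sol l T G"
  unfolding feasible_sol_def by (metis table_split_residue table_split_subseteq)

lemma table_split_move:
  assumes split: "table_split T G R" and M: "M \<subseteq># G q"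
  shows "table_split T (G(q := G q - M)) (R + M)"
proof (cases "q \<in> qis T")
  case False
  then have "M = {#}"
    using table_split_subseteq[OF split, of q] M grp_eq_empty_if_notin_qis[OF False]
    by (metis subset_mset.le_zero_eq subset_mset.order_trans)
  with split show ?thesis
    by simp
next
  case True
  let ?rest = "\<Sum>r\<in>qis T - {q}. G r"
  have "T = R + (\<Sum>r\<in>qis T. G r)"
    using split by (rule table_split_eq)
  also have "\<dots> = R + (G q + ?rest)"
    using True by (simp add: sum.remove)
  also have "\<dots> = R + M + ((G q - M) + ?rest)"
    using M by (metis add.assoc subset_mset.add_diff_inverse)
  also have "\<dots> = R + M + (\<Sum>r\<in>qis T. (G(q := G q - M)) r)"
    using True by (simp add: sum.remove)
  finally have "T = R + M + (\<Sum>r\<in>qis T. (G(q := G q - M)) r)" .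
  moreover have "(G(q := G q - M)) r \<subseteq># grp T r" for r
    using table_split_subseteq[OF split, of r]
    by (metis fun_upd_apply diff_subset_eq_self subset_mset.order_trans)
  ultimately show ?thesis
    unfolding table_split_def by blast
qed

lemma diff_diff_single:
  assumes "G \<subseteq># A" and "t \<in># G"
  shows "A - (G - {#t#}) = add_mset t (A - G)"
proof -
  have "{#t#} \<subseteq># G"
    using assms(2) by simp
  then have "A - (G - {#t#}) = A + {#t#} - G"
    by (rule subset_mset.diff_diff_right)
  also have "\<dots> = A - G + {#t#}"
    using assms(1) by (rule subset_mset.diff_add_assoc2)
  finally show ?thesis
    by simp
qed

lemma hv_diff_lower_bound_if_eligible_2:
  assumes sub: "Q' \<subseteq># Q" and elig: "eligible 2 Q'"
  shows "2 * hv Q v \<le> size Q + hv (Q - Q') v"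
proof -
  have "hv (Q - Q') v + hv Q' v = hv Q v"
    using sub by (rule hv_diff_add)
  moreover have "size (Q - Q') + size Q' = size Q"
    using size_Diff_submset[OF sub] size_mset_mono[OF sub] by simp
  moreover have "2 * hv Q' v \<le> size Q'"
    using elig by (simp add: eligible_iff)
  moreover have "hv (Q - Q') v \<le> size (Q - Q')"
    by (rule hv_le_size)
  ultimately show ?thesis
    by linarith
qed

text \<open>The Phase One invariant of a QI class \<open>A\<close> with current group \<open>B\<close>: all removed tuples
  share one SA value \<open>v\<close>, and there are at most \<open>2 h(A,v) - |A|\<close> of them, which every
  2-eligible sub-multiset of \<open>A\<close> must remove as well.\<close>

definition forced_removal :: "('q \<times> 's) multiset \<Rightarrow> ('q \<times> 's) multiset \<Rightarrow> bool" where
  "forced_removal A B \<longleftrightarrow> (\<exists>v. (\<forall>u. u \<noteq> v \<longrightarrow> hv (A - B) u = 0) \<and>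
     (hv (A - B) v = 0 \<or> hv (A - B) v + size A \<le> 2 * hv A v))"

lemma forced_removal_refl: "forced_removal A A"
  by (auto simp: forced_removal_def)

lemma forced_removal_le:
  assumes "forced_removal A B" and sub: "Q' \<subseteq># A" and elig: "eligible 2 Q'"
  shows forced_removal_hv_le: "hv (A - B) u \<le> hv (A - Q') u"
    and forced_removal_size_le: "size (A - B) \<le> size (A - Q')"
proof -
  obtain v where single: "\<And>u. u \<noteq> v \<Longrightarrow> hv (A - B) u = 0"
    and few: "hv (A - B) v = 0 \<or> hv (A - B) v + size A \<le> 2 * hv A v"
    using assms(1) unfolding forced_removal_def by blast
  have v: "hv (A - B) v \<le> hv (A - Q') v"
    using few hv_diff_lower_bound_if_eligible_2[OF sub elig, of v] by linarith
  then show "hv (A - B) u \<le> hv (A - Q') u"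
    using single by (cases "u = v") auto
  show "size (A - B) \<le> size (A - Q')"
    using size_eq_hv_if_single_value[of v "A - B"] single v hv_le_size[of "A - Q'" v] by simp
qed

lemma forced_removal_remove_pillar:
  assumes sub: "G \<subseteq># A" and forced: "forced_removal A G" and not_elig: "\<not> eligible 2 G"
    and t: "t \<in># G" and pillar: "snd t \<in> pillars G"
  shows "forced_removal A (G - {#t#})"
proof -
  define D where "D = A - G"
  define w where "w = snd t"
  obtain v where single: "\<And>u. u \<noteq> v \<Longrightarrow> hv D u = 0"
    and few: "hv D v = 0 \<or> hv D v + size A \<le> 2 * hv A v"
    using forced unfolding forced_removal_def D_def by blast
  have hv_new: "hv (A - (G - {#t#})) u = hv D u + (if u = w then 1 else 0)" for u
    unfolding diff_diff_single[OF sub t] D_def w_def by simp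
  have hv_A: "hv A u = hv G u + hv D u" for u
    unfolding D_def using hv_diff_add[OF sub, of u] by simp
  have size_A: "size A = size G + size D"
    unfolding D_def using size_Diff_submset[OF sub] size_mset_mono[OF sub] by simp
  have size_D: "size D = hv D v"
    using single by (rule size_eq_hv_if_single_value)
  have G_w: "size G < 2 * hv G w"
    using not_elig pillar unfolding eligible_def pillars_def w_def by simp
  show ?thesis
  proof (cases "hv D v = 0")
    case True
    then have "hv D u = 0" for u
      using size_D hv_le_size[of D u] by simp
    moreover have "1 + size A \<le> 2 * hv A w"
      using G_w hv_A[of w] size_A size_D True calculation by simp
    ultimately show ?thesis
      using hv_new unfolding forced_removal_def by (intro exI[of _ w]) simp
  next
    case False
    then have many: "hv D v + size A \<le> 2 * hv A v"
      using few by simp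
    have "w = v"
    proof (rule ccontr)
      assume "w \<noteq> v"
      then show False
        using G_w many hv_A[of w] single[of w] size_A size_D hv_add_hv_le_size[of w v A]
        by linarith
    qed
    then have "hv D v + 1 + size A \<le> 2 * hv A v"
      using G_w[unfolded \<open>w = v\<close>] hv_A[of v] size_A size_D by linarith
    then show ?thesis
      using \<open>w = v\<close> single hv_new unfolding forced_removal_def by (intro exI[of _ v]) simp
  qed
qed

lemma residue_dominated_by_feasible:
  assumes split: "table_split T G R" and forced: "\<And>q. forced_removal (grp T q) (G q)"
    and feas: "feasible_sol 2 T Q'"
  shows residue_hv_le_feasible: "hv R v \<le> hv (residue T Q') v"
    and residue_size_le_feasible: "size R \<le> size (residue T Q')"
proof -
  have G: "\<And>q. G q \<subseteq># grp T q"
    and Q': "\<And>q. Q' q \<subseteq># grp T q" "\<And>q. eligible 2 (Q' q)"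
    using table_split_subseteq[OF split] feas unfolding feasible_sol_def by auto
  have R: "R = (\<Sum>q\<in>qis T. grp T q - G q)"
    using table_split_residue[OF split] residue_eq_sum_diff[OF G] by simp
  have res: "residue T Q' = (\<Sum>q\<in>qis T. grp T q - Q' q)"
    using residue_eq_sum_diff[OF Q'(1)] .
  show "hv R v \<le> hv (residue T Q') v"
    unfolding R res hv_sum[OF finite_qis]
    by (intro sum_mono forced_removal_hv_le[OF forced Q'])
  show "size R \<le> size (residue T Q')"
    unfolding R res size_multiset_sum
    by (intro sum_mono forced_removal_size_le[OF forced Q'])
qed

text \<open>All tuples of a group share their QI value, so \<open>pillar_sample Q\<close> contains exactly one
  tuple of each pillar of \<open>Q\<close>: what Phase Two moves out of a thin group.\<close>

definition pillar_sample :: "('q \<times> 's) multiset \<Rightarrow> ('q \<times> 's) multiset" where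
  "pillar_sample Q = mset_set {t \<in> set_mset Q. snd t \<in> pillars Q}"

lemma pillar_sample_subseteq: "pillar_sample Q \<subseteq># Q"
proof -
  have "pillar_sample Q \<subseteq># mset_set (set_mset Q)"
    unfolding pillar_sample_def by (intro subset_imp_msubset_mset_set) auto
  also have "\<dots> \<subseteq># Q"
    by (rule mset_set_set_mset_msubset)
  finally show ?thesis .
qed

lemma image_snd_pillar_sample:
  assumes single: "\<And>t. t \<in># Q \<Longrightarrow> fst t = q"
  shows "image_mset snd (pillar_sample Q) = mset_set (snd ` set_mset Q \<inter> pillars Q)"
proof -
  let ?S = "{t \<in> set_mset Q. snd t \<in> pillars Q}"
  have "inj_on snd ?S"
    using single by (intro inj_onI) (auto simp: prod_eq_iff)
  moreover have "snd ` ?S = snd ` set_mset Q \<inter> pillars Q"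
    by blast
  ultimately show ?thesis
    unfolding pillar_sample_def by (simp add: image_mset_mset_set)
qed

lemma hv_pillar_sample:
  assumes "\<And>t. t \<in># Q \<Longrightarrow> fst t = q"
  shows "hv (pillar_sample Q) w = (if w \<in> snd ` set_mset Q \<inter> pillars Q then 1 else 0)"
  using image_snd_pillar_sample[OF assms] by (simp add: hv_def)

lemma size_pillar_sample:
  assumes "\<And>t. t \<in># Q \<Longrightarrow> fst t = q"
  shows "size (pillar_sample Q) = card (snd ` set_mset Q \<inter> pillars Q)"
  by (metis image_snd_pillar_sample[OF assms] size_image_mset size_mset_set)

lemma thin_pillar_sample:
  assumes single: "\<And>t. t \<in># Q \<Longrightarrow> fst t = q" and thin: "thin l Q" and ne: "Q \<noteq> {#}"
  shows "pillar_sample Q \<noteq> {#}" and "size (pillar_sample Q) \<le> l"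
    and "eligible l (Q - pillar_sample Q)"
proof -
  define W where "W = snd ` set_mset Q \<inter> pillars Q"
  define M where "M = pillar_sample Q"
  have fin: "finite W"
    by (simp add: W_def)
  have hv_M: "hv M w = (if w \<in> W then 1 else 0)" for w
    unfolding M_def W_def by (rule hv_pillar_sample[OF single])
  have size_M: "size M = card W"
    unfolding M_def W_def by (rule size_pillar_sample[OF single])
  have pos: "0 < hmax Q"
    using ne by (simp add: hmax_pos_iff)
  then obtain t where t: "t \<in># Q" "hv Q (snd t) = hmax Q"
    using hmax_attained by blast
  then have "snd t \<in> W"
    unfolding W_def pillars_def by auto
  then show "M \<noteq> {#}" unfolding M_def[symmetric]
    using hv_M[of "snd t"] by auto
  have "card W * hmax Q = (\<Sum>w\<in>W. hv Q w)"
    by (simp add: W_def pillars_def)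
  also have "\<dots> \<le> l * hmax Q"
    using sum_hv_le_size[OF fin, of Q] thin unfolding thin_def by simp
  finally have card: "card W \<le> l"
    using pos by simp
  then show "size M \<le> l" unfolding M_def[symmetric]
    using size_M by simp
  have "l * hv (Q - M) w \<le> size (Q - M)" for w
  proof -
    have "hv (Q - M) w \<le> hmax Q - 1"
      using hv_diff[OF pillar_sample_subseteq, of Q w] hv_le_hmax[of Q w] hv_M[of w]
        hv_pos_iff[of Q w]
      unfolding M_def W_def pillars_def by (cases "hv Q w = 0") auto
    then have "l * hv (Q - M) w \<le> l * (hmax Q - 1)"
      by (rule mult_le_mono2)
    also have "\<dots> = l * hmax Q - l"
      by (simp add: diff_mult_distrib2)
    also have "\<dots> \<le> size (Q - M)"
      using size_Diff_submset[OF pillar_sample_subseteq[of Q]] size_M card thin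
      unfolding M_def thin_def by simp
    finally show ?thesis .
  qed
  then show "eligible l (Q - M)" unfolding M_def[symmetric]
    by (simp add: eligible_iff)
qed

lemma fat_remove_eligible:
  assumes "fat l Q" and "t \<in># Q"
  shows "eligible l (Q - {#t#})"
proof -
  have "hmax (Q - {#t#}) \<le> hmax Q"
    by (intro hmax_le) (meson diff_subset_eq_self hv_le_hmax hv_mono le_trans)
  then have "l * hmax (Q - {#t#}) \<le> l * hmax Q"
    by (rule mult_le_mono2)
  then show ?thesis
    using assms(1) size_Diff_singleton[OF assms(2)] unfolding fat_def eligible_def by linarith
qed

lemma exists_alive_value:
  assumes split: "table_split T G R" and not_elig: "\<not> eligible 2 R" and elig_T: "eligible 2 T"
  shows "\<exists>v. alive_val 2 G R v"
proof (rule ccontr)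
  assume none: "\<nexists>v. alive_val 2 G R v"
  obtain p where p: "pillars R = {p}" "hv R p = hmax R" "size R < 2 * hv R p"
    "\<And>w. w \<noteq> p \<Longrightarrow> hv R w < hv R p"
    using not_eligible_2_unique_pillar[OF not_elig] by blast
  have group: "size (G q) \<le> 2 * hv (G q) p" for q
  proof (cases "G q = {#}")
    case False
    then obtain t where "t \<in># G q"
      by blast
    then have "0 < hv (G q) (snd t)"
      by (simp add: hv_pos_iff)
    then have "dead 2 (G q) R"
      using none unfolding alive_val_def alive_grp_def by blast
    then have "thin 2 (G q)" and "p \<in> pillars (G q)"
      using p(1) unfolding dead_def conflicting_def by auto
    then show ?thesis
      unfolding thin_def pillars_def by simp
  qed simp
  have T: "T = R + (\<Sum>q\<in>qis T. G q)"
    using split by (rule table_split_eq)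
  have "size T = size (R + (\<Sum>q\<in>qis T. G q))"
    by (simp only: T[symmetric])
  also have "\<dots> = size R + (\<Sum>q\<in>qis T. size (G q))"
    by simp
  also have "\<dots> < 2 * hv R p + (\<Sum>q\<in>qis T. 2 * hv (G q) p)"
    using p(3) group by (intro add_less_le_mono sum_mono) auto
  also have "\<dots> = 2 * hv (R + (\<Sum>q\<in>qis T. G q)) p"
    by (simp add: hv_sum sum_distrib_left)
  also have "\<dots> = 2 * hv T p"
    by (simp only: T[symmetric])
  finally show False
    using elig_T unfolding eligible_iff by (meson not_le)
qed

fun alg_inv :: "('q \<times> 's) multiset \<Rightarrow> ('q, 's) alg_state \<Rightarrow> bool" where
  "alg_inv T (PhaseOne qs, G, R) \<longleftrightarrow> table_split T G R \<and>
     (\<forall>q. q \<notin> set qs \<longrightarrow> eligible 2 (G q)) \<and> (\<forall>q. forced_removal (grp T q) (G q))"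
| "alg_inv T (PhaseTwo, G, R) \<longleftrightarrow> table_split T G R \<and> (\<forall>q. eligible 2 (G q)) \<and>
     \<not> eligible 2 R \<and> (\<forall>Q'. feasible_sol 2 T Q' \<longrightarrow> 2 * hmax R \<le> size (residue T Q'))"
| "alg_inv T (Terminated, G, R) \<longleftrightarrow> feasible_sol 2 T G \<and> R = residue T G \<and>
     (\<forall>Q'. feasible_sol 2 T Q' \<longrightarrow> size R \<le> size (residue T Q') + 1)"
| "alg_inv T (PhaseTwoEnded, G, R) \<longleftrightarrow> False"

fun alg_measure :: "('q \<times> 's) multiset \<Rightarrow> ('q, 's) alg_state \<Rightarrow> nat" where
  "alg_measure T (PhaseOne qs, G, R) = size T - size R + length qs + 2"
| "alg_measure T (PhaseTwo, G, R) = size T - size R + 1"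
| "alg_measure T (Terminated, G, R) = 0"
| "alg_measure T (PhaseTwoEnded, G, R) = 0"

lemma alg_inv_init: "set qs = qis T \<Longrightarrow> alg_inv T (alg_init T qs)"
  by (auto simp: alg_init_def table_split_init forced_removal_refl grp_eq_empty_if_notin_qis
      eligible_def hmax_def)

lemma phase_one_remove_inv:
  assumes inv: "alg_inv T (PhaseOne (q # qs), G, R)" and not_elig: "\<not> eligible 2 (G q)"
    and t: "t \<in># G q" and pillar: "snd t \<in> pillars (G q)"
  shows "alg_inv T (PhaseOne (q # qs), G(q := G q - {#t#}), R + {#t#})"
proof -
  have split: "table_split T G R"
    using inv by simp
  have "forced_removal (grp T q) (G q - {#t#})"
    using table_split_subseteq[OF split] inv not_elig t pillar
    by (intro forced_removal_remove_pillar) auto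
  then show ?thesis
    using inv table_split_move[OF split, of "{#t#}"] t by auto
qed

lemma phase_one_finish_inv:
  assumes inv: "alg_inv T (PhaseOne [], G, R)"
  shows "eligible 2 R \<Longrightarrow> alg_inv T (Terminated, G, R)"
    and "\<not> eligible 2 R \<Longrightarrow> alg_inv T (PhaseTwo, G, R)"
proof -
  have split: "table_split T G R" and elig: "\<And>q. eligible 2 (G q)"
    and forced: "\<And>q. forced_removal (grp T q) (G q)"
    using inv by auto
  show "eligible 2 R \<Longrightarrow> alg_inv T (Terminated, G, R)"
    using table_split_feasible[OF split elig] table_split_residue[OF split]
      residue_size_le_feasible[OF split forced]
    by fastforce
  have "2 * hmax R \<le> size (residue T Q')" if feas: "feasible_sol 2 T Q'" for Q'
  proof -
    have "hmax R \<le> hmax (residue T Q')"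
      using residue_hv_le_feasible[OF split forced feas] hv_le_hmax
      by (meson hmax_le le_trans)
    moreover have "eligible 2 (residue T Q')"
      using feas unfolding feasible_sol_def by simp
    ultimately show ?thesis
      unfolding eligible_def by simp
  qed
  then show "\<not> eligible 2 R \<Longrightarrow> alg_inv T (PhaseTwo, G, R)"
    using split elig by simp
qed

lemma phase_two_move_inv:
  assumes inv: "alg_inv T (PhaseTwo, G, R)" and p: "p \<in> pillars R"
    and M: "M \<subseteq># G q" "hv M p = 0" "\<And>w. hv M w \<le> 1" "M \<noteq> {#}" "size M \<le> 2"
    and elig: "eligible 2 (G q - M)"
  defines "s' \<equiv> (if eligible 2 (R + M) then Terminated else PhaseTwo, G(q := G q - M), R + M)"
  shows "alg_inv T s' \<and> alg_measure T s' < alg_measure T (PhaseTwo, G, R)"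
proof -
  have split: "table_split T G R" and all_elig: "\<And>r. eligible 2 (G r)" and not_elig: "\<not> eligible 2 R"
    and bound: "\<And>Q'. feasible_sol 2 T Q' \<Longrightarrow> 2 * hmax R \<le> size (residue T Q')"
    using inv by auto
  obtain p' where p': "pillars R = {p'}" "hv R p' = hmax R" "size R < 2 * hv R p'"
    "\<And>w. w \<noteq> p' \<Longrightarrow> hv R w < hv R p'"
    using not_eligible_2_unique_pillar[OF not_elig] by blast
  with p have [simp]: "p' = p"
    by simp
  have split': "table_split T (G(q := G q - M)) (R + M)"
    using table_split_move[OF split M(1)] .
  have elig': "eligible 2 ((G(q := G q - M)) r)" for r
    using all_elig elig by simp
  have "hv (R + M) w \<le> hmax R" for w
    using p'(2) p'(4)[of w] M(2) M(3)[of w] by (cases "w = p") auto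
  then have hmax': "hmax (R + M) \<le> hmax R"
    by (rule hmax_le)
  show ?thesis
  proof (cases "eligible 2 (R + M)")
    case True
    have "feasible_sol 2 T (G(q := G q - M))"
      using split' elig' True by (rule table_split_feasible)
    moreover have "size (R + M) \<le> size (residue T Q') + 1" if "feasible_sol 2 T Q'" for Q'
      using bound[OF that] p'(2,3) M(5) by simp
    ultimately show ?thesis
      using True table_split_residue[OF split'] unfolding s'_def by simp
  next
    case False
    have "2 * hmax (R + M) \<le> size (residue T Q')" if "feasible_sol 2 T Q'" for Q'
      using bound[OF that] hmax' by simp
    moreover have "size (R + M) \<le> size T"
      using table_split_size_le[OF split'] .
    ultimately show ?thesis
      using False split' elig' M(4) unfolding s'_def by (simp add: nonempty_has_size)
  qed
qed

lemma fat_alive_min_value_not_pillar: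
  assumes not_elig: "\<not> eligible 2 R" and p: "p \<in> pillars R"
    and fat: "fat 2 (G q)" and alive: "alive_grp 2 (G q) R"
    and min: "\<forall>w. alive_val 2 G R w \<longrightarrow> hv R v \<le> hv R w"
  shows "v \<noteq> p"
proof
  assume [simp]: "v = p"
  obtain p' where p': "pillars R = {p'}" "\<And>w. w \<noteq> p' \<Longrightarrow> hv R w < hv R p'"
    using not_eligible_2_unique_pillar[OF not_elig] by blast
  with p have [simp]: "p' = p"
    by simp
  have "\<exists>w. w \<noteq> p \<and> 0 < hv (G q) w"
  proof (rule ccontr)
    assume "\<not> ?thesis"
    then have "size (G q) = hv (G q) p"
      using size_eq_hv_if_single_value[of p "G q"] by auto
    then show False
      using fat hv_le_hmax[of "G q" p] unfolding fat_def by simp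
  qed
  then obtain w where w: "w \<noteq> p" "0 < hv (G q) w"
    by blast
  then have "alive_val 2 G R w"
    using alive unfolding alive_val_def by blast
  then show False
    using min p'(2)[of w] w(1) by fastforce
qed

lemma phase_two_fat_move_inv:
  assumes inv: "alg_inv T (PhaseTwo, G, R)" and alive: "alive_grp 2 (G q) R"
    and fat: "fat 2 (G q)" and min: "\<forall>w. alive_val 2 G R w \<longrightarrow> hv R (snd t) \<le> hv R w"
    and t: "t \<in># G q"
  defines "s' \<equiv> (if eligible 2 (R + {#t#}) then Terminated else PhaseTwo,
    G(q := G q - {#t#}), R + {#t#})"
  shows "alg_inv T s' \<and> alg_measure T s' < alg_measure T (PhaseTwo, G, R)"
proof -
  obtain p where p: "p \<in> pillars R"
    using inv not_eligible_2_unique_pillar by fastforce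
  have "snd t \<noteq> p"
    using inv p fat alive min by (intro fat_alive_min_value_not_pillar) auto
  then have "hv {#t#} p = 0"
    by simp
  then show ?thesis
    unfolding s'_def using t fat_remove_eligible[OF fat t]
    by (intro phase_two_move_inv[OF inv p]) auto
qed

lemma phase_two_thin_move_inv:
  assumes inv: "alg_inv T (PhaseTwo, G, R)" and alive: "alive_grp 2 (G q) R"
    and thin: "thin 2 (G q)" and ne: "G q \<noteq> {#}"
  defines "M \<equiv> pillar_sample (G q)"
  defines "s' \<equiv> (if eligible 2 (R + M) then Terminated else PhaseTwo, G(q := G q - M), R + M)"
  shows "alg_inv T s' \<and> alg_measure T s' < alg_measure T (PhaseTwo, G, R)"
proof -
  obtain p where p: "p \<in> pillars R"
    using inv not_eligible_2_unique_pillar by fastforce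
  have "table_split T G R"
    using inv by simp
  then have single: "fst t = q" if "t \<in># G q" for t
    using that by (meson fst_of_mem_grp mset_subset_eqD table_split_subseteq)
  note sample = thin_pillar_sample[OF single thin ne, folded M_def]
  have "p \<notin> pillars (G q)"
    using alive thin p unfolding alive_grp_def dead_def conflicting_def by blast
  then have "hv M p = 0" and "hv M w \<le> 1" for w
    using hv_pillar_sample[where Q = "G q", OF single] unfolding M_def by auto
  then show ?thesis
    unfolding s'_def using sample pillar_sample_subseteq[of "G q", folded M_def]
    by (intro phase_two_move_inv[OF inv p]) auto
qed

lemma alg_inv_step:
  assumes step: "alg_step 2 s s'" and inv: "alg_inv T s" and elig_T: "eligible 2 T"
  shows "alg_inv T s' \<and> alg_measure T s' < alg_measure T s"
  using step inv
proof (induction rule: alg_step.induct)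
  case (p1_move G q t qs R)
  then have inv': "alg_inv T (PhaseOne (q # qs), G(q := G q - {#t#}), R + {#t#})"
    by (intro phase_one_remove_inv)
  then have "table_split T (G(q := G q - {#t#})) (R + {#t#})"
    by simp
  then have "size (R + {#t#}) \<le> size T"
    by (rule table_split_size_le)
  with inv' show ?case
    by simp
next
  case (p1_next G q qs R)
  then show ?case
    by auto
next
  case (p1_term R G)
  then show ?case
    using phase_one_finish_inv(1)[OF p1_term.prems p1_term.hyps] by (simp del: alg_inv.simps)
next
  case (p1_to_p2 R G)
  then show ?case
    using phase_one_finish_inv(2)[OF p1_to_p2.prems p1_to_p2.hyps] by (simp del: alg_inv.simps)
next
  case (p2_end G R)
  then show ?case
    using exists_alive_value[of T G R] elig_T by auto
next
  case (p2_fat G R v q t G' R')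
  then show ?case
    using phase_two_fat_move_inv[OF p2_fat.prems p2_fat.hyps(3,5) _ p2_fat.hyps(6)]
    by simp
next
  case (p2_thin G R v q M G' R')
  have "G q \<noteq> {#}"
    using p2_thin.hyps(4) by auto
  then show ?case
    unfolding p2_thin.hyps(6-8) pillar_sample_def[symmetric]
    by (rule phase_two_thin_move_inv[OF p2_thin.prems p2_thin.hyps(3,5)])
qed

lemma phase_two_can_step:
  assumes inv: "alg_inv T (PhaseTwo, G, R)" and elig_T: "eligible 2 T"
  shows "\<exists>s'. alg_step 2 (PhaseTwo, G, R) s'"
proof -
  have "\<exists>v. alive_val 2 G R v"
    using inv elig_T exists_alive_value by auto
  then obtain v where v: "alive_val 2 G R v"
    and min: "\<forall>w. alive_val 2 G R w \<longrightarrow> hv R v \<le> hv R w"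
    using ex_has_least_nat[where m = "hv R"] by blast
  then obtain q where q: "alive_grp 2 (G q) R" "0 < hv (G q) v"
    unfolding alive_val_def by blast
  have "eligible 2 (G q)"
    using inv by simp
  then consider "thin 2 (G q)" | "fat 2 (G q)"
    unfolding eligible_def thin_def fat_def by linarith
  then show ?thesis
  proof cases
    case 1
    show ?thesis
      by (rule exI, rule alg_step.p2_thin[OF v min q 1 refl refl refl])
  next
    case 2
    have "v \<in> snd ` set_mset (G q)"
      using q(2) by (simp add: hv_pos_iff)
    then obtain t where t: "t \<in># G q" "snd t = v"
      by blast
    show ?thesis
      by (rule exI, rule alg_step.p2_fat[OF v min q 2 t refl refl])
  qed
qed

lemma alg_can_step:
  assumes inv: "alg_inv T s" and elig_T: "eligible 2 T" and running: "fst s \<noteq> Terminated"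
  shows "\<exists>s'. alg_step 2 s s'"
proof -
  obtain ph G R where s: "s = (ph, G, R)"
    by (cases s) auto
  show ?thesis
  proof (cases ph)
    case (PhaseOne qs)
    show ?thesis
    proof (cases qs)
      case Nil
      then show ?thesis
        unfolding s PhaseOne by (cases "eligible 2 R") (auto intro: alg_step.p1_term alg_step.p1_to_p2)
    next
      case (Cons q qs')
      show ?thesis
      proof (cases "eligible 2 (G q)")
        case True
        show ?thesis
          unfolding s PhaseOne Cons by (rule exI, rule alg_step.p1_next[of 2 G q, OF True])
      next
        case False
        then have "0 < hmax (G q)"
          unfolding eligible_def by simp
        then obtain t where t: "t \<in># G q" "snd t \<in> pillars (G q)"
          using hmax_attained unfolding pillars_def by blast
        show ?thesis
          unfolding s PhaseOne Cons by (rule exI, rule alg_step.p1_move[of 2 G q, OF False t])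
      qed
    qed
  next
    case PhaseTwo
    then show ?thesis
      using s inv elig_T phase_two_can_step by simp
  qed (use s inv running in auto)
qed

lemma alg_inv_reachable:
  assumes "eligible 2 T" and "set qs = qis T" and "(alg_step 2)\<^sup>*\<^sup>* (alg_init T qs) s"
  shows "alg_inv T s"
  using assms(3)
proof (induction rule: rtranclp_induct)
  case base
  show ?case
    using assms(2) by (rule alg_inv_init)
next
  case (step s s')
  then show ?case
    using alg_inv_step assms(1) by blast
qed

lemma no_infinite_chain_if_measure_decreases:
  assumes dec: "\<And>s s'. r s s' \<Longrightarrow> I s \<Longrightarrow> I s' \<and> (m s' :: nat) < m s"
    and start: "I (f 0)"
  shows "\<not> (\<forall>i. r (f i) (f (Suc i)))"
proof
  assume chain: "\<forall>i. r (f i) (f (Suc i))"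
  have "I (f i) \<and> m (f i) + i \<le> m (f 0)" for i
  proof (induction i)
    case (Suc i)
    then show ?case
      using dec[of "f i" "f (Suc i)"] chain by fastforce
  qed (simp add: start)
  from this[of "Suc (m (f 0))"] show False
    by simp
qed

lemma OPT_attained:
  assumes "feasible_sol l T Q"
  shows "\<exists>Q'. feasible_sol l T Q' \<and> OPT l T = size (residue T Q')"
proof -
  let ?X = "{size (residue T Q') | Q'. feasible_sol l T Q'}"
  have "?X \<subseteq> {..size T}"
    unfolding residue_def by (auto intro: size_mset_mono)
  then have "finite ?X"
    by (rule finite_subset) simp
  moreover have "?X \<noteq> {}"
    using assms by blast
  ultimately have "OPT l T \<in> ?X"
    unfolding OPT_def by (rule Min_in)
  then show ?thesis
    by blast
qed

lemma alg_no_infinite_run: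
  assumes "eligible 2 T" and "set qs = qis T"
  shows "\<nexists>f. f 0 = alg_init T qs \<and> (\<forall>i. alg_step 2 (f i) (f (Suc i)))"
proof (intro notI, elim exE conjE)
  fix f
  assume start: "f 0 = alg_init T qs" and run: "\<forall>i. alg_step 2 (f i) (f (Suc i))"
  have "\<not> (\<forall>i. alg_step 2 (f i) (f (Suc i)))"
  proof (rule no_infinite_chain_if_measure_decreases[where I = "alg_inv T" and m = "alg_measure T"])
    show "alg_inv T s' \<and> alg_measure T s' < alg_measure T s"
      if "alg_step 2 s s'" and "alg_inv T s" for s s'
      using that assms(1) by (rule alg_inv_step)
    show "alg_inv T (f 0)"
      unfolding start using assms(2) by (rule alg_inv_init)
  qed
  with run show False
    by blast
qed

lemma terminated_inv_OPT_plus_1: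
  assumes "alg_inv T (Terminated, G, R)"
  shows "feasible_sol 2 T G \<and> R = residue T G \<and> size R \<le> OPT 2 T + 1"
proof -
  have feas: "feasible_sol 2 T G" and res: "R = residue T G"
    and bound: "\<forall>Q'. feasible_sol 2 T Q' \<longrightarrow> size R \<le> size (residue T Q') + 1"
    using assms unfolding alg_inv.simps by blast+
  obtain Q' where "feasible_sol 2 T Q'" "OPT 2 T = size (residue T Q')"
    using OPT_attained[OF feas] by blast
  with bound have "size R \<le> OPT 2 T + 1"
    by simp
  with feas res show ?thesis
    by blast
qed

theorem theorem2:
  fixes T :: "('q \<times> 's) multiset" and qs :: "'q list"
  assumes "eligible 2 T" and "distinct qs" and "set qs = qis T"
  shows "(\<not> (\<exists>f. f 0 = alg_init T qs \<and> (\<forall>i. alg_step 2 (f i) (f (Suc i))))) \<and>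
         (\<forall>s. (alg_step 2)\<^sup>*\<^sup>* (alg_init T qs) s \<and> (\<nexists>s'. alg_step 2 s s')
           \<longrightarrow> fst s = Terminated) \<and>
         (\<forall>G R. (alg_step 2)\<^sup>*\<^sup>* (alg_init T qs) (Terminated, G, R) \<longrightarrow>
           feasible_sol 2 T G \<and> R = residue T G \<and> size R \<le> OPT 2 T + 1)"
proof -
  have inv: "alg_inv T s" if "(alg_step 2)\<^sup>*\<^sup>* (alg_init T qs) s" for s
    using assms(1,3) that by (rule alg_inv_reachable)
  have "fst s = Terminated"
    if "(alg_step 2)\<^sup>*\<^sup>* (alg_init T qs) s" and "\<nexists>s'. alg_step 2 s s'" for s
    using alg_can_step[OF inv[OF that(1)] assms(1)] that(2) by blast
  with alg_no_infinite_run[OF assms(1,3)] show ?thesis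
    using terminated_inv_OPT_plus_1[OF inv] by blast
qed

end
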